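(* With $S$ and $T$ as in the context, $p_S\ge p_T/2$.
   Context: Barycentric subdivisions: $T_0$ is an equilateral triangle with vertices $v_0,v_1,v_2$. $T_n$ is obtained by subdividing every triangular face $\{x,y,z\}$ of $T_{n-1}$ into the six triangles $\{x,m_{xy},c\},\{m_{xy},y,c\},\{y,m_{yz},c\},\{m_{yz},z,c\},\{z,m_{zx},c\},\{m_{zx},x,c\}$, where $m_{uv}$ are side midpoints and $c$ is the barycenter. As a simple graph, $T_n$ has the vertices of this triangulation and the sides of its faces as edges. Non-p.c.f. Sierpinski gasket: $S_0=T_0$. $S_n$ is obtained from $S_{n-1}$ by replacing each triangle $\{x,y,z\}$ of $S_{n-1}$, with its own three edges, by new vertices $m_{xy},m_{yz},m_{zx},c$ private to that triangle and the same six triangles, each carrying its own three edges. Thus distinct triangles have disjoint edge sets. $S$ and $T$ denote the limits. Bond percolation with parameter $p$: each edge receives an i.i.d. uniform $[0,1]$ label and is open if the label is $<p$. For $G\in\{S,T\}$ with approximations $G_n$, $p_G=\sup\{p\in[0,1]:\mathbb{P}_p(\text{there is an open path from } v_0 \text{ to } v_1 \text{ in } G_n)\to0 \text{ as } n\to\infty\}$. *)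

theory Defs
  imports "HOL-Analysis.Analysis" "HOL-Probability.Product_PMF"
begin

text \<open>Triangles are ordered triples of corners. A triangle at level n is addressed by a list
  of n choices in {0..5}; the head of the list is the most recent subdivision choice.\<close>

definition piece :: "nat \<Rightarrow> 'v \<Rightarrow> 'v \<Rightarrow> 'v \<Rightarrow> 'v \<Rightarrow> 'v \<Rightarrow> 'v \<Rightarrow> 'v \<Rightarrow> 'v \<times> 'v \<times> 'v" where
  "piece i x y z mxy myz mzx c =
     (if i = 0 then (x, mxy, c) else if i = 1 then (mxy, y, c)
      else if i = 2 then (y, myz, c) else if i = 3 then (myz, z, c)
      else if i = 4 then (z, mzx, c) else (mzx, x, c))"

definition addrs :: "nat \<Rightarrow> nat list set" where
  "addrs n = {a. length a = n \<and> (\<forall>i\<in>set a. i < 6)}"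

definition sides :: "'v \<times> 'v \<times> 'v \<Rightarrow> ('v \<times> 'v) set" where
  "sides t = (case t of (x, y, z) \<Rightarrow> {(x, y), (y, z), (z, x)})"

definition side :: "'v \<times> 'v \<times> 'v \<Rightarrow> nat \<Rightarrow> 'v \<times> 'v" where
  "side t j = (case t of (x, y, z) \<Rightarrow> (if j = 0 then (x, y) else if j = 1 then (y, z) else (z, x)))"

definition tv0 :: complex where "tv0 = 0"
definition tv1 :: complex where "tv1 = 1"
definition tv2 :: complex where "tv2 = Complex (1/2) (sqrt 3 / 2)"

fun Tcorners :: "nat list \<Rightarrow> complex \<times> complex \<times> complex" where
  "Tcorners [] = (tv0, tv1, tv2)"
| "Tcorners (i # a) = (case Tcorners a of (x, y, z) \<Rightarrow>
      piece i x y z ((x + y) / 2) ((y + z) / 2) ((z + x) / 2) ((x + y + z) / 3))"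

definition TE :: "nat \<Rightarrow> complex set set" where
  "TE n = {{u, v} | u v a. a \<in> addrs n \<and> (u, v) \<in> sides (Tcorners a)}"

text \<open>Vertices: (a,k) with k in {0,1,2} for a = [] are v0,v1,v2; (a,3..6) are the new private
  vertices m_xy, m_yz, m_zx, c created when subdividing the triangle with address a.\<close>
type_synonym svert = "nat list \<times> nat"

fun Scorners :: "nat list \<Rightarrow> svert \<times> svert \<times> svert" where
  "Scorners [] = (([], 0), ([], 1), ([], 2))"
| "Scorners (i # a) = (case Scorners a of (x, y, z) \<Rightarrow>
      piece i x y z (a, 3) (a, 4) (a, 5) (a, 6))"

text \<open>Edges of S_n: each triangle carries its own three edges (so parallel edges may occur).\<close>
definition SE :: "nat \<Rightarrow> (nat list \<times> nat) set" where
  "SE n = addrs n \<times> {0, 1, 2}"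

definition Sends :: "nat list \<times> nat \<Rightarrow> svert \<times> svert" where
  "Sends e = side (Scorners (fst e)) (snd e)"

definition perc :: "'e set \<Rightarrow> real \<Rightarrow> ('e \<Rightarrow> bool) pmf" where
  "perc E p = Pi_pmf E False (\<lambda>_. bernoulli_pmf p)"

definition T_cross :: "nat \<Rightarrow> real \<Rightarrow> real" where
  "T_cross n p = measure_pmf.prob (perc (TE n) p)
     {\<omega>. (tv0, tv1) \<in> {(u, v). {u, v} \<in> TE n \<and> \<omega> {u, v}}\<^sup>*}"

definition S_cross :: "nat \<Rightarrow> real \<Rightarrow> real" where
  "S_cross n p = measure_pmf.prob (perc (SE n) p)
     {\<omega>. (([], 0), ([], 1)) \<in>
          {(u, v). \<exists>e\<in>SE n. \<omega> e \<and> (Sends e = (u, v) \<or> Sends e = (v, u))}\<^sup>*}"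

definition p_T :: real where
  "p_T = Sup {p \<in> {0..1}. (\<lambda>n. T_cross n p) \<longlonglongrightarrow> 0}"

definition p_S :: real where
  "p_S = Sup {p \<in> {0..1}. (\<lambda>n. S_cross n p) \<longlonglongrightarrow> 0}"

end

theory Submission
  imports Defs
begin

text \<open>Project every vertex of \<open>S\<^sub>n\<close> to its geometric position. This maps \<open>S\<^sub>n\<close> onto \<open>T\<^sub>n\<close>,
  open crossings onto open crossings, and every edge of \<open>T\<^sub>n\<close> is the image of at most two edges
  of \<open>S\<^sub>n\<close>: an edge of \<open>T\<^sub>n\<close> is a side of at most two faces, since the faces of \<open>T\<^sub>n\<close> have
  disjoint interiors and two faces with a common side on the same side of it would overlap.
  Declaring an edge of \<open>T\<^sub>n\<close> open when one of its preimages is open therefore gives independent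
  edges that are open with probability \<open>1 - (1 - p/2)\<^sup>k \<le> 1 - (1 - p/2)\<^sup>2 \<le> p\<close> if \<open>S\<^sub>n\<close>-edges
  are open with probability \<open>p/2\<close>. By monotonicity of percolation in the edge probabilities,
  crossing \<open>S\<^sub>n\<close> at \<open>p/2\<close> is at most as likely as crossing \<open>T\<^sub>n\<close> at \<open>p\<close>; hence if the
  crossing probabilities of \<open>T\<^sub>n\<close> at \<open>p\<close> vanish, so do those of \<open>S\<^sub>n\<close> at \<open>p/2\<close>.\<close>

definition cross2 :: "complex \<Rightarrow> complex \<Rightarrow> real" where
  "cross2 u v = Re u * Im v - Im u * Re v"

definition nondegenerate :: "complex \<times> complex \<times> complex \<Rightarrow> bool" where
  "nondegenerate t = (case t of (x, y, z) \<Rightarrow> cross2 (y - x) (z - x) \<noteq> 0)"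

definition bary_coords :: "complex \<times> complex \<times> complex \<Rightarrow> complex \<Rightarrow> real \<Rightarrow> real \<Rightarrow> real \<Rightarrow> bool" where
  "bary_coords t P a b c = (case t of (x, y, z) \<Rightarrow> a > 0 \<and> b > 0 \<and> c > 0 \<and> a + b + c = 1 \<and>
      P = of_real a * x + of_real b * y + of_real c * z)"

definition in_open_triangle :: "complex \<times> complex \<times> complex \<Rightarrow> complex \<Rightarrow> bool" where
  "in_open_triangle t P = (\<exists>a b c. bary_coords t P a b c)"

definition bary_child :: "nat \<Rightarrow> complex \<times> complex \<times> complex \<Rightarrow> complex \<times> complex \<times> complex" where
  "bary_child i t = (case t of (x, y, z) \<Rightarrow>
     piece i x y z ((x + y) / 2) ((y + z) / 2) ((z + x) / 2) ((x + y + z) / 3))"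

lemma Tcorners_Cons: "Tcorners (i # a) = bary_child i (Tcorners a)"
  by (simp add: bary_child_def split: prod.splits)

declare Tcorners.simps(2)[simp del]

lemma nondegenerate_bary_child: "nondegenerate t \<Longrightarrow> nondegenerate (bary_child i t)"
  by (cases t) (auto simp: bary_child_def piece_def nondegenerate_def cross2_def field_simps)

lemma nondegenerate_Tcorners: "nondegenerate (Tcorners a)"
  by (induction a)
    (simp_all add: Tcorners_Cons nondegenerate_bary_child, simp add: nondegenerate_def cross2_def tv0_def tv1_def tv2_def)

lemma bary_coords_unique:
  assumes "nondegenerate (x, y, z)" "bary_coords (x, y, z) P a b c" "bary_coords (x, y, z) P a' b' c'"
  shows "a = a' \<and> b = b' \<and> c = c'"
proof -
  have D: "cross2 (y - x) (z - x) \<noteq> 0" using assms(1) by (simp add: nondegenerate_def)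
  have sums: "a = 1 - b - c" "a' = 1 - b' - c'" using assms(2,3) by (auto simp: bary_coords_def)
  have "of_real a * x + of_real b * y + of_real c * z = of_real a' * x + of_real b' * y + of_real c' * z"
    using assms(2,3) by (auto simp: bary_coords_def)
  then have lin: "of_real (b - b') * (y - x) + of_real (c - c') * (z - x) = 0"
    unfolding sums by (simp add: algebra_simps)
  have re: "(b - b') * Re (y - x) + (c - c') * Re (z - x) = 0"
    and im: "(b - b') * Im (y - x) + (c - c') * Im (z - x) = 0"
    using arg_cong[OF lin, of Re] arg_cong[OF lin, of Im] by simp_all
  have "(b - b') * cross2 (y - x) (z - x) =
      Im (z - x) * ((b - b') * Re (y - x) + (c - c') * Re (z - x))
      - Re (z - x) * ((b - b') * Im (y - x) + (c - c') * Im (z - x))"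
    by (simp add: cross2_def algebra_simps)
  also have "\<dots> = 0" unfolding re im by simp
  finally have "b = b'" using D by simp
  have "(c - c') * cross2 (y - x) (z - x) =
      Re (y - x) * ((b - b') * Im (y - x) + (c - c') * Im (z - x))
      - Im (y - x) * ((b - b') * Re (y - x) + (c - c') * Re (z - x))"
    by (simp add: cross2_def algebra_simps)
  also have "\<dots> = 0" unfolding re im by simp
  finally have "c = c'" using D by simp
  with \<open>b = b'\<close> show ?thesis using sums by simp
qed

lemma bary_coords_rotate: "bary_coords (x, y, z) P a b c \<longleftrightarrow> bary_coords (y, z, x) P b c a"
  by (auto simp: bary_coords_def algebra_simps)

lemma bary_coords_swap: "bary_coords (x, y, z) P a b c \<longleftrightarrow> bary_coords (y, x, z) P b a c"
  by (auto simp: bary_coords_def algebra_simps)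

lemma in_open_triangle_rotate: "in_open_triangle (x, y, z) P \<longleftrightarrow> in_open_triangle (y, z, x) P"
  by (metis in_open_triangle_def bary_coords_rotate)

lemma in_open_triangle_swap: "in_open_triangle (x, y, z) P \<longleftrightarrow> in_open_triangle (y, x, z) P"
  by (metis in_open_triangle_def bary_coords_swap)

text \<open>The six children of a triangle are the regions where the barycentric coordinates of the
  parent come in the six possible strict orders.\<close>

definition child_order :: "nat \<Rightarrow> real \<Rightarrow> real \<Rightarrow> real \<Rightarrow> bool" where
  "child_order i a b c = (if i = 0 then a > b \<and> b > c else if i = 1 then b > a \<and> a > c
     else if i = 2 then b > c \<and> c > a else if i = 3 then c > b \<and> b > a
     else if i = 4 then c > a \<and> a > b else a > c \<and> c > b)"

lemma child_order_unique:
  "i < 6 \<Longrightarrow> i' < 6 \<Longrightarrow> child_order i a b c \<Longrightarrow> child_order i' a b c \<Longrightarrow> i = i'"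
  by (auto simp: child_order_def split: if_splits)

lemma in_open_triangle_bary_child:
  assumes "in_open_triangle (bary_child i (x, y, z)) P"
  shows "\<exists>a b c. bary_coords (x, y, z) P a b c \<and> child_order i a b c"
proof -
  obtain a b g where h: "a > 0" "b > 0" "g > 0" "a + b + g = 1"
    and P: "P = of_real a * fst (bary_child i (x, y, z)) + of_real b * fst (snd (bary_child i (x, y, z)))
                + of_real g * snd (snd (bary_child i (x, y, z)))"
    using assms by (cases "bary_child i (x, y, z)") (auto simp: in_open_triangle_def bary_coords_def)
  note simps = bary_coords_def child_order_def bary_child_def piece_def P field_simps
  consider "i = 0" | "i = 1" | "i = 2" | "i = 3" | "i = 4" | "i \<ge> 5" by linarith
  then show ?thesis
  proof cases
    case 1
    show ?thesis using h 1
      by (intro exI[of _ "a + b/2 + g/3"] exI[of _ "b/2 + g/3"] exI[of _ "g/3"]) (auto simp: simps)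
  next
    case 2
    show ?thesis using h 2
      by (intro exI[of _ "a/2 + g/3"] exI[of _ "a/2 + b + g/3"] exI[of _ "g/3"]) (auto simp: simps)
  next
    case 3
    show ?thesis using h 3
      by (intro exI[of _ "g/3"] exI[of _ "a + b/2 + g/3"] exI[of _ "b/2 + g/3"]) (auto simp: simps)
  next
    case 4
    show ?thesis using h 4
      by (intro exI[of _ "g/3"] exI[of _ "a/2 + g/3"] exI[of _ "a/2 + b + g/3"]) (auto simp: simps)
  next
    case 5
    show ?thesis using h 5
      by (intro exI[of _ "b/2 + g/3"] exI[of _ "g/3"] exI[of _ "a + b/2 + g/3"]) (auto simp: simps)
  next
    case 6
    show ?thesis using h 6
      by (intro exI[of _ "a/2 + b + g/3"] exI[of _ "g/3"] exI[of _ "a/2 + g/3"]) (auto simp: simps)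
  qed
qed

lemma in_open_triangle_parent: "in_open_triangle (bary_child i t) P \<Longrightarrow> in_open_triangle t P"
  by (cases t) (metis in_open_triangle_def in_open_triangle_bary_child)

lemma Tcorners_open_disjoint:
  assumes "a \<in> addrs n" "a' \<in> addrs n"
    and "in_open_triangle (Tcorners a) P" "in_open_triangle (Tcorners a') P"
  shows "a = a'"
  using assms
proof (induction n arbitrary: a a')
  case 0
  then show ?case by (simp add: addrs_def)
next
  case (Suc n)
  then obtain i b i' b' where a: "a = i # b" "a' = i' # b'" "i < 6" "i' < 6"
    and b: "b \<in> addrs n" "b' \<in> addrs n"
    by (auto simp: addrs_def length_Suc_conv)
  have "b = b'"
    using Suc.IH[OF b] Suc.prems(3,4) a by (auto simp: Tcorners_Cons intro: in_open_triangle_parent)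
  obtain x y z where t: "Tcorners b = (x, y, z)" by (cases "Tcorners b") auto
  have nd: "nondegenerate (x, y, z)" using nondegenerate_Tcorners[of b] t by simp
  obtain c1 c2 c3 where 1: "bary_coords (x, y, z) P c1 c2 c3" "child_order i c1 c2 c3"
    using in_open_triangle_bary_child[of i x y z P] Suc.prems t a by (auto simp: Tcorners_Cons)
  obtain d1 d2 d3 where 2: "bary_coords (x, y, z) P d1 d2 d3" "child_order i' d1 d2 d3"
    using in_open_triangle_bary_child[of i' x y z P] Suc.prems t a \<open>b = b'\<close>
    by (auto simp: Tcorners_Cons)
  have "i = i'"
    using bary_coords_unique[OF nd 1(1) 2(1)] child_order_unique[OF a(3,4)] 1(2) 2(2) by auto
  with a \<open>b = b'\<close> show ?case by simp
qed

lemma cross2_decompose: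
  assumes "cross2 a b \<noteq> 0"
  shows "c = of_real (cross2 c b / cross2 a b) * a + of_real (cross2 a c / cross2 a b) * b"
proof -
  have "Re c * cross2 a b = cross2 c b * Re a + cross2 a c * Re b"
    and "Im c * cross2 a b = cross2 c b * Im a + cross2 a c * Im b"
    by (simp_all add: cross2_def algebra_simps)
  with assms show ?thesis by (simp add: complex_eq_iff field_simps)
qed

text \<open>A point close to the midpoint of \<open>uv\<close>, moved slightly towards \<open>w\<^sub>1\<close>, lies in both triangles.\<close>

lemma open_triangles_same_side_meet:
  assumes same: "cross2 (v - u) (w1 - u) * cross2 (v - u) (w2 - u) > 0"
  shows "\<exists>P. in_open_triangle (u, v, w1) P \<and> in_open_triangle (u, v, w2) P"
proof -
  define m where "m = (u + v) / 2"
  define d where "d = v - u"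
  define e where "e = w2 - m"
  have ced: "cross2 e d = - cross2 (v - u) (w2 - u)"
    and c1d: "cross2 (w1 - m) d = - cross2 (v - u) (w1 - u)"
    unfolding e_def d_def m_def by (simp_all add: cross2_def field_simps)
  have ne: "cross2 e d \<noteq> 0" using ced same by auto
  define \<alpha> where "\<alpha> = cross2 (w1 - m) d / cross2 e d"
  define \<beta> where "\<beta> = cross2 e (w1 - m) / cross2 e d"
  have w1: "w1 - m = of_real \<alpha> * e + of_real \<beta> * d"
    unfolding \<alpha>_def \<beta>_def by (rule cross2_decompose[OF ne])
  have \<alpha>: "\<alpha> > 0"
    unfolding \<alpha>_def ced c1d using same by (simp add: zero_less_mult_iff zero_less_divide_iff)
  define s where "s = 1 / (1 + \<alpha> + 2 * \<bar>\<beta>\<bar>)"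
  have "s * (\<alpha> + 2 * \<bar>\<beta>\<bar>) < 1"
    using \<alpha> by (simp add: s_def)
  then have s: "0 < s" "s < 1" "s * \<alpha> + 2 * s * \<bar>\<beta>\<bar> < 1"
    using \<alpha> by (simp_all add: algebra_simps) (simp_all add: s_def)
  define P where "P = m + of_real s * (w1 - m)"
  have "bary_coords (u, v, w1) P ((1 - s) / 2) ((1 - s) / 2) s"
    using s by (auto simp: bary_coords_def P_def m_def field_simps)
  moreover have "bary_coords (u, v, w2) P
      ((1 - s * \<alpha>) / 2 - s * \<beta>) ((1 - s * \<alpha>) / 2 + s * \<beta>) (s * \<alpha>)"
  proof -
    have "\<bar>s * \<beta>\<bar> = s * \<bar>\<beta>\<bar>" using s(1) by (simp add: abs_mult)
    moreover have "P = m + of_real s * (of_real \<alpha> * e + of_real \<beta> * d)"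
      unfolding P_def w1 ..
    then have "P = of_real ((1 - s * \<alpha>) / 2 - s * \<beta>) * u
        + of_real ((1 - s * \<alpha>) / 2 + s * \<beta>) * v + of_real (s * \<alpha>) * w2"
      unfolding m_def e_def d_def by (simp add: field_simps)
    ultimately show ?thesis
      using s \<alpha> by (auto simp: bary_coords_def field_simps)
  qed
  ultimately show ?thesis by (auto simp: in_open_triangle_def)
qed

lemma side_apex:
  assumes "nondegenerate t" "j < 3" "side t j = (p, q)" "{p, q} = {u, v}"
  shows "\<exists>w. (\<forall>P. in_open_triangle t P \<longleftrightarrow> in_open_triangle (u, v, w) P)
    \<and> cross2 (v - u) (w - u) \<noteq> 0"
proof -
  obtain x y z where t: "t = (x, y, z)" by (cases t) auto
  have D: "cross2 (y - x) (z - x) \<noteq> 0" "cross2 (z - y) (x - y) \<noteq> 0" "cross2 (x - z) (y - z) \<noteq> 0"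
    using assms(1) t by (auto simp: nondegenerate_def cross2_def algebra_simps)
  have rot: "in_open_triangle (x, y, z) P \<longleftrightarrow> in_open_triangle (y, z, x) P"
    "in_open_triangle (x, y, z) P \<longleftrightarrow> in_open_triangle (z, x, y) P" for P
    using in_open_triangle_rotate[of x y z] in_open_triangle_rotate[of y z x] by simp_all
  have "\<exists>w. (\<forall>P. in_open_triangle t P \<longleftrightarrow> in_open_triangle (p, q, w) P)
      \<and> cross2 (q - p) (w - p) \<noteq> 0"
  proof -
    have "j = 0 \<or> j = 1 \<or> j = 2" using assms(2) by linarith
    then consider "p = x" "q = y" | "p = y" "q = z" | "p = z" "q = x"
      using assms(3) t by (auto simp: side_def)
    then show ?thesis
    proof cases
      case 1
      then show ?thesis using t D(1) by (intro exI[of _ z]) simp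
    next
      case 2
      then show ?thesis using t D(2) rot(1) by (intro exI[of _ x]) simp
    next
      case 3
      then show ?thesis using t D(3) rot(2) by (intro exI[of _ y]) simp
    qed
  qed
  then obtain w where w: "\<forall>P. in_open_triangle t P \<longleftrightarrow> in_open_triangle (p, q, w) P"
    "cross2 (q - p) (w - p) \<noteq> 0" by blast
  have "p \<noteq> q" using w(2) by (auto simp: cross2_def)
  with assms(4) consider "p = u" "q = v" | "p = v" "q = u" by (auto simp: doubleton_eq_iff)
  then show ?thesis
  proof cases
    case 1
    then show ?thesis using w by blast
  next
    case 2
    have "cross2 (v - u) (w - u) = - cross2 (u - v) (w - v)" by (simp add: cross2_def algebra_simps)
    then show ?thesis using w 2 in_open_triangle_swap[of v u w] by (intro exI[of _ w]) simp
  qed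
qed

lemma nondegenerate_side_inj:
  assumes "nondegenerate t" "j < 3" "j' < 3" "side t j = (p, q)" "side t j' = (p', q')"
    "{p, q} = {p', q'}"
  shows "j = j'"
proof -
  obtain x y z where t: "t = (x, y, z)" by (cases t) auto
  have "x \<noteq> y" "y \<noteq> z" "z \<noteq> x"
    using assms(1) t by (auto simp: nondegenerate_def cross2_def)
  then show ?thesis using assms(2-6) t
    by (auto simp: side_def doubleton_eq_iff split: if_splits)
qed

definition Tedge :: "nat list \<times> nat \<Rightarrow> complex set" where
  "Tedge e = (case side (Tcorners (fst e)) (snd e) of (u, v) \<Rightarrow> {u, v})"

lemma Tedge_apex:
  assumes "e \<in> SE n" "Tedge e = {u, v}"
  shows "\<exists>w. (\<forall>P. in_open_triangle (Tcorners (fst e)) P \<longleftrightarrow> in_open_triangle (u, v, w) P)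
    \<and> cross2 (v - u) (w - u) \<noteq> 0"
proof -
  obtain p q where pq: "side (Tcorners (fst e)) (snd e) = (p, q)" by fastforce
  show ?thesis
    using side_apex[OF nondegenerate_Tcorners _ pq] pq assms by (auto simp: Tedge_def SE_def)
qed

lemma Tedge_same_face_inj:
  assumes "e \<in> SE n" "e' \<in> SE n" "fst e = fst e'" "Tedge e = Tedge e'"
  shows "e = e'"
proof -
  obtain p q where pq: "side (Tcorners (fst e)) (snd e) = (p, q)" by fastforce
  obtain p' q' where pq': "side (Tcorners (fst e)) (snd e') = (p', q')" by fastforce
  have "snd e = snd e'"
    using nondegenerate_side_inj[OF nondegenerate_Tcorners _ _ pq pq'] assms pq pq'
    by (auto simp: Tedge_def SE_def)
  with assms(3) show ?thesis by (simp add: prod_eq_iff)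
qed

text \<open>Faces of \<open>T\<^sub>n\<close> over a common side are told apart by the side of the line \<open>uv\<close> on which
  their apex lies.\<close>

lemma card_Tedge_fiber_le_2: "card {e \<in> SE n. Tedge e = b} \<le> 2"
proof (cases "{e \<in> SE n. Tedge e = b} = {}")
  case False
  then obtain e0 where "Tedge e0 = b" by blast
  then obtain u v where b: "b = {u, v}"
    by (cases "side (Tcorners (fst e0)) (snd e0)") (auto simp: Tedge_def)
  define F where "F = {e \<in> SE n. Tedge e = b}"
  have "\<forall>e\<in>F. \<exists>w. (\<forall>P. in_open_triangle (Tcorners (fst e)) P \<longleftrightarrow> in_open_triangle (u, v, w) P)
      \<and> cross2 (v - u) (w - u) \<noteq> 0"
  proof
    fix e assume "e \<in> F"
    then show "\<exists>w. (\<forall>P. in_open_triangle (Tcorners (fst e)) P \<longleftrightarrow> in_open_triangle (u, v, w) P)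
      \<and> cross2 (v - u) (w - u) \<noteq> 0"
      by (intro Tedge_apex[of e n]) (simp_all add: F_def b)
  qed
  then obtain w where w: "\<forall>e\<in>F.
      (\<forall>P. in_open_triangle (Tcorners (fst e)) P \<longleftrightarrow> in_open_triangle (u, v, w e) P)
      \<and> cross2 (v - u) (w e - u) \<noteq> 0"
    by (elim bchoice[elim_format] exE)
  define side_sign where "side_sign e = sgn (cross2 (v - u) (w e - u))" for e
  have "inj_on side_sign F"
  proof (rule inj_onI)
    fix e e' assume e: "e \<in> F" "e' \<in> F" and eq: "side_sign e = side_sign e'"
    have we: "\<forall>P. in_open_triangle (Tcorners (fst e)) P \<longleftrightarrow> in_open_triangle (u, v, w e) P"
      "cross2 (v - u) (w e - u) \<noteq> 0" using bspec[OF w e(1)] by simp_all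
    have we': "\<forall>P. in_open_triangle (Tcorners (fst e')) P \<longleftrightarrow> in_open_triangle (u, v, w e') P"
      "cross2 (v - u) (w e' - u) \<noteq> 0" using bspec[OF w e(2)] by simp_all
    have "cross2 (v - u) (w e - u) * cross2 (v - u) (w e' - u) > 0"
      using eq we(2) we'(2) unfolding side_sign_def
      by (auto simp: sgn_real_def zero_less_mult_iff split: if_splits)
    then obtain P where "in_open_triangle (u, v, w e) P" "in_open_triangle (u, v, w e') P"
      using open_triangles_same_side_meet by blast
    then have "in_open_triangle (Tcorners (fst e)) P" "in_open_triangle (Tcorners (fst e')) P"
      using we(1) we'(1) by simp_all
    moreover have "fst e \<in> addrs n" "fst e' \<in> addrs n" using e by (auto simp: F_def SE_def)
    ultimately have "fst e = fst e'" by (intro Tcorners_open_disjoint)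
    moreover have "e \<in> SE n" "e' \<in> SE n" "Tedge e = Tedge e'" using e by (simp_all add: F_def)
    ultimately show "e = e'" by (intro Tedge_same_face_inj)
  qed
  moreover have "side_sign e \<in> {-1, 1}" if "e \<in> F" for e
    using bspec[OF w that] by (simp add: side_sign_def sgn_real_def)
  ultimately have "card F \<le> card {-1, 1 :: real}"
    by (intro card_inj_on_le) auto
  then show ?thesis by (simp add: F_def)
next
  case True
  then show ?thesis unfolding True by simp
qed

lemma pmf_bool_eqI: "pmf M True = pmf N True \<Longrightarrow> M = (N :: bool pmf)"
  by (rule pmf_eqI) (metis (full_types) pmf_False_conv_True)

lemma measure_pmf_prob_mono_coupling:
  assumes "map_pmf fst J = M" "map_pmf snd J = N"
    and "\<And>x y. (x, y) \<in> set_pmf J \<Longrightarrow> x \<in> U \<Longrightarrow> y \<in> V"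
  shows "measure_pmf.prob M U \<le> measure_pmf.prob N V"
proof -
  have "measure_pmf.prob M U = measure_pmf.prob J (fst -` U)" using assms(1) by auto
  also have "\<dots> \<le> measure_pmf.prob J (snd -` V)"
    by (rule measure_pmf.finite_measure_mono_AE) (auto simp: AE_measure_pmf_iff dest: assms(3))
  also have "\<dots> = measure_pmf.prob N V" using assms(2) by auto
  finally show ?thesis .
qed

lemma bernoulli_pmf_disj:
  assumes "0 \<le> p" "p \<le> 1" "0 \<le> r" "r \<le> 1"
  shows "do {y \<leftarrow> bernoulli_pmf p; z \<leftarrow> bernoulli_pmf r; return_pmf (y \<or> z)}
    = bernoulli_pmf (p + (1 - p) * r)"
proof (rule pmf_bool_eqI)
  have "(1 - p) * r \<le> 1 - p" using assms by (simp add: mult_left_le)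
  then have "0 \<le> p + (1 - p) * r" "p + (1 - p) * r \<le> 1" using assms by simp_all
  then show "pmf (do {y \<leftarrow> bernoulli_pmf p; z \<leftarrow> bernoulli_pmf r; return_pmf (y \<or> z)}) True =
        pmf (bernoulli_pmf (p + (1 - p) * r)) True"
    using assms by (simp add: pmf_bind)
qed

lemma map_pmf_Bex_Pi_bernoulli:
  assumes "finite A" "0 \<le> p" "p \<le> 1"
  shows "map_pmf (\<lambda>\<omega>. \<exists>a\<in>A. \<omega> a) (Pi_pmf A False (\<lambda>_. bernoulli_pmf p))
    = bernoulli_pmf (1 - (1 - p) ^ card A)"
  using assms(1)
proof (induction rule: finite_induct)
  case empty
  show ?case by (rule pmf_bool_eqI) simp
next
  case (insert x A)
  define r where "r = 1 - (1 - p) ^ card A"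
  have r: "0 \<le> r" "r \<le> 1" using assms unfolding r_def by (auto simp: power_le_one)
  have "map_pmf (\<lambda>\<omega>. \<exists>a\<in>insert x A. \<omega> a) (Pi_pmf (insert x A) False (\<lambda>_. bernoulli_pmf p))
      = do {y \<leftarrow> bernoulli_pmf p; f \<leftarrow> Pi_pmf A False (\<lambda>_. bernoulli_pmf p);
            return_pmf (y \<or> (\<exists>a\<in>A. f a))}"
    using insert.hyps
    by (simp add: Pi_pmf_insert' map_bind_pmf cong: bind_pmf_cong) (intro bind_pmf_cong refl, auto)
  also have "\<dots> = do {y \<leftarrow> bernoulli_pmf p;
      z \<leftarrow> map_pmf (\<lambda>\<omega>. \<exists>a\<in>A. \<omega> a) (Pi_pmf A False (\<lambda>_. bernoulli_pmf p)); return_pmf (y \<or> z)}"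
    by (simp add: bind_map_pmf)
  also have "\<dots> = do {y \<leftarrow> bernoulli_pmf p; z \<leftarrow> bernoulli_pmf r; return_pmf (y \<or> z)}"
    using insert.IH r_def by simp
  also have "\<dots> = bernoulli_pmf (p + (1 - p) * r)" using bernoulli_pmf_disj[OF assms(2,3) r] .
  also have "p + (1 - p) * r = 1 - (1 - p) ^ card (insert x A)"
    using insert.hyps by (simp add: r_def algebra_simps)
  finally show ?case .
qed

lemma map_pmf_fiber_Bex_Pi_bernoulli:
  assumes "finite B" "finite A" "f ` A \<subseteq> B" "0 \<le> p" "p \<le> 1"
  shows "map_pmf (\<lambda>\<omega> b. \<exists>a\<in>A. f a = b \<and> \<omega> a) (Pi_pmf A False (\<lambda>_. bernoulli_pmf p)) =
         Pi_pmf B False (\<lambda>b. bernoulli_pmf (1 - (1 - p) ^ card {a\<in>A. f a = b}))"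
  using assms(1,2,3)
proof (induction B arbitrary: A rule: finite_induct)
  case empty
  then have "A = {}" by auto
  then show ?case by (simp add: fun_eq_iff)
next
  case (insert b B)
  define A1 where "A1 = {a\<in>A. f a = b}"
  define A2 where "A2 = {a\<in>A. f a \<noteq> b}"
  have fin: "finite A1" "finite A2" using insert.prems by (auto simp: A1_def A2_def)
  have AU: "A = A1 \<union> A2" "A1 \<inter> A2 = {}" by (auto simp: A1_def A2_def)
  have fA2: "f ` A2 \<subseteq> B" using insert.prems by (auto simp: A2_def)
  let ?M1 = "Pi_pmf A1 False (\<lambda>_. bernoulli_pmf p)"
  let ?M2 = "Pi_pmf A2 False (\<lambda>_. bernoulli_pmf p)"
  let ?OR2 = "\<lambda>h b'. \<exists>a\<in>A2. f a = b' \<and> h a"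
  let ?EX1 = "\<lambda>g. \<exists>a\<in>A1. g a"
  let ?Q = "\<lambda>b. bernoulli_pmf (1 - (1 - p) ^ card {a\<in>A. f a = b})"
  have "Pi_pmf A False (\<lambda>_. bernoulli_pmf p)
      = map_pmf (\<lambda>(g, h) x. if x \<in> A1 then g x else h x) (pair_pmf ?M1 ?M2)"
    unfolding AU(1) by (rule Pi_pmf_union[OF fin AU(2)])
  then have "map_pmf (\<lambda>\<omega> b. \<exists>a\<in>A. f a = b \<and> \<omega> a) (Pi_pmf A False (\<lambda>_. bernoulli_pmf p))
      = map_pmf (\<lambda>(y, k). k(b := y)) (map_pmf (\<lambda>(g, h). (?EX1 g, ?OR2 h)) (pair_pmf ?M1 ?M2))"
    by (simp add: pmf.map_comp o_def case_prod_unfold)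
       (intro map_pmf_cong refl, auto simp: fun_eq_iff A1_def A2_def)
  also have "\<dots> = map_pmf (\<lambda>(y, k). k(b := y)) (pair_pmf (map_pmf ?EX1 ?M1) (map_pmf ?OR2 ?M2))"
    by (simp only: map_pair)
  also have "map_pmf ?EX1 ?M1 = bernoulli_pmf (1 - (1 - p) ^ card A1)"
    by (rule map_pmf_Bex_Pi_bernoulli[OF fin(1) assms(4,5)])
  also have "map_pmf ?OR2 ?M2
      = Pi_pmf B False (\<lambda>b. bernoulli_pmf (1 - (1 - p) ^ card {a\<in>A2. f a = b}))"
    by (rule insert.IH[OF fin(2) fA2])
  also have "\<dots> = Pi_pmf B False ?Q"
  proof (intro Pi_pmf_cong refl)
    fix x assume "x \<in> B"
    then have "{a\<in>A2. f a = x} = {a\<in>A. f a = x}" using insert.hyps by (auto simp: A2_def)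
    then show "bernoulli_pmf (1 - (1 - p) ^ card {a\<in>A2. f a = x}) = ?Q x" by simp
  qed
  also have "map_pmf (\<lambda>(y, k). k(b := y))
      (pair_pmf (bernoulli_pmf (1 - (1 - p) ^ card A1)) (Pi_pmf B False ?Q))
      = Pi_pmf (insert b B) False ?Q"
    by (subst Pi_pmf_insert[OF insert.hyps]) (simp add: A1_def)
  finally show ?case .
qed

lemma bernoulli_pmf_thinning:
  assumes "0 \<le> r" "r \<le> q" "q \<le> 1" "0 < q"
  shows "bernoulli_pmf r
    = bernoulli_pmf q \<bind> (\<lambda>x. if x then bernoulli_pmf (r / q) else return_pmf False)"
proof (rule pmf_bool_eqI)
  have "0 \<le> r / q" "r / q \<le> 1" using assms by auto
  then show "pmf (bernoulli_pmf r) True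
      = pmf (bernoulli_pmf q \<bind> (\<lambda>x. if x then bernoulli_pmf (r / q) else return_pmf False)) True"
    using assms by (simp add: pmf_bind)
qed

text \<open>The coupling keeps each open edge \<open>b\<close> of the \<open>q\<close>-configuration with probability
  \<open>r b / q\<close>.\<close>

lemma prob_Pi_bernoulli_mono:
  assumes B: "finite B" and r: "\<And>b. b \<in> B \<Longrightarrow> 0 \<le> r b \<and> r b \<le> q" and q: "q \<le> 1"
    and up: "\<And>\<eta> \<eta>'. \<eta> \<in> U \<Longrightarrow> (\<forall>b. \<eta> b \<longrightarrow> \<eta>' b) \<Longrightarrow> \<eta>' \<in> U"
  shows "measure_pmf.prob (Pi_pmf B False (\<lambda>b. bernoulli_pmf (r b))) U \<le>
         measure_pmf.prob (Pi_pmf B False (\<lambda>_. bernoulli_pmf q)) U"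
proof (cases "q > 0")
  case False
  then have "r b = q" if "b \<in> B" for b using r[OF that] by linarith
  then have "Pi_pmf B False (\<lambda>b. bernoulli_pmf (r b)) = Pi_pmf B False (\<lambda>_. bernoulli_pmf q)"
    by (intro Pi_pmf_cong) auto
  then show ?thesis by simp
next
  case True
  define K where "K b = (\<lambda>x. if x then bernoulli_pmf (r b / q) else return_pmf False)" for b
  define M where "M = Pi_pmf B False (\<lambda>_. bernoulli_pmf q)"
  define N where "N \<eta> = Pi_pmf B False (\<lambda>b. K b (\<eta> b))" for \<eta>
  define J where "J = M \<bind> (\<lambda>\<eta>. map_pmf (\<lambda>\<zeta>. (\<zeta>, \<eta>)) (N \<eta>))"
  have "bernoulli_pmf (r b) = bernoulli_pmf q \<bind> K b" if "b \<in> B" for b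
    unfolding K_def using r[OF that] q True by (intro bernoulli_pmf_thinning) auto
  then have "Pi_pmf B False (\<lambda>b. bernoulli_pmf (r b)) = Pi_pmf B False (\<lambda>b. bernoulli_pmf q \<bind> K b)"
    by (intro Pi_pmf_cong) auto
  also have "\<dots> = M \<bind> N" unfolding M_def N_def by (rule Pi_pmf_bind[OF B])
  finally have thin: "Pi_pmf B False (\<lambda>b. bernoulli_pmf (r b)) = M \<bind> N" .
  show ?thesis
    unfolding thin M_def[symmetric]
  proof (rule measure_pmf_prob_mono_coupling[of J])
    show "map_pmf fst J = M \<bind> N" by (simp add: J_def map_bind_pmf pmf.map_comp o_def)
    have "map_pmf snd J = M \<bind> (\<lambda>\<eta>. map_pmf (\<lambda>_. \<eta>) (N \<eta>))"
      by (simp add: J_def map_bind_pmf pmf.map_comp o_def)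
    then show "map_pmf snd J = M" by (simp add: map_pmf_const bind_return_pmf')
  next
    fix \<zeta> \<eta> assume "(\<zeta>, \<eta>) \<in> set_pmf J" "\<zeta> \<in> U"
    then have "\<zeta> \<in> set_pmf (N \<eta>)" unfolding J_def by (auto simp: set_bind_pmf)
    then have "\<zeta> \<in> PiE_dflt B False (set_pmf \<circ> (\<lambda>b. K b (\<eta> b)))"
      unfolding N_def set_Pi_pmf[OF B] .
    then have "\<zeta> b \<longrightarrow> \<eta> b" for b
      by (cases "\<eta> b") (auto simp: PiE_dflt_def K_def)
    then show "\<eta> \<in> U" using up[OF \<open>\<zeta> \<in> U\<close>] by blast
  qed
qed

definition Spoint :: "svert \<Rightarrow> complex" where
  "Spoint v = (case Tcorners (fst v) of (x, y, z) \<Rightarrow>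
     (let k = snd v in if k = 0 then x else if k = 1 then y else if k = 2 then z
      else if k = 3 then (x + y) / 2 else if k = 4 then (y + z) / 2 else if k = 5 then (z + x) / 2
      else (x + y + z) / 3))"

abbreviation map_triple :: "('a \<Rightarrow> 'b) \<Rightarrow> 'a \<times> 'a \<times> 'a \<Rightarrow> 'b \<times> 'b \<times> 'b" where
  "map_triple g \<equiv> map_prod g (map_prod g g)"

lemma map_triple_piece:
  "map_triple g (piece i x y z m1 m2 m3 c) = piece i (g x) (g y) (g z) (g m1) (g m2) (g m3) (g c)"
  by (simp add: piece_def)

lemma map_triple_Spoint_Scorners: "map_triple Spoint (Scorners a) = Tcorners a"
proof (induction a)
  case Nil
  show ?case by (simp add: Spoint_def)
next
  case (Cons i a)
  obtain X Y Z where S: "Scorners a = (X, Y, Z)" by (cases "Scorners a") auto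
  obtain x y z where T: "Tcorners a = (x, y, z)" by (cases "Tcorners a") auto
  have "Spoint X = x" "Spoint Y = y" "Spoint Z = z" using Cons.IH S T by auto
  then show ?case
    using S T by (simp add: map_triple_piece Tcorners_Cons bary_child_def Spoint_def Let_def)
qed

lemma side_map_triple: "side (map_triple g t) j = map_prod g g (side t j)"
  by (cases t) (simp add: side_def)

lemma Tedge_Sends: "Tedge e = (case Sends e of (u, v) \<Rightarrow> {Spoint u, Spoint v})"
  unfolding Tedge_def Sends_def map_triple_Spoint_Scorners[symmetric] side_map_triple
  by (simp add: case_prod_unfold)

lemma sides_eq_side_image: "sides t = side t ` {0, 1, 2}"
  by (cases t) (auto simp: sides_def side_def)

lemma TE_eq_image_Tedge: "TE n = Tedge ` SE n"
proof
  show "TE n \<subseteq> Tedge ` SE n"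
  proof
    fix E assume "E \<in> TE n"
    then obtain u v a where E: "E = {u, v}" "a \<in> addrs n" "(u, v) \<in> sides (Tcorners a)"
      by (auto simp: TE_def)
    then obtain j where j: "j \<in> {0, 1, 2::nat}" "side (Tcorners a) j = (u, v)"
      unfolding sides_eq_side_image image_iff by metis
    then have "Tedge (a, j) = E" "(a, j) \<in> SE n" using E by (simp_all add: Tedge_def SE_def)
    then show "E \<in> Tedge ` SE n" by (metis image_eqI)
  qed
next
  show "Tedge ` SE n \<subseteq> TE n"
  proof
    fix E assume "E \<in> Tedge ` SE n"
    then obtain a j where E: "a \<in> addrs n" "j \<in> {0, 1, 2}" "E = Tedge (a, j)" by (auto simp: SE_def)
    obtain u v where uv: "side (Tcorners a) j = (u, v)" by fastforce
    have "(u, v) \<in> sides (Tcorners a)" using E(2) uv by (auto simp: sides_eq_side_image)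
    then show "E \<in> TE n" using E uv unfolding TE_def Tedge_def by auto
  qed
qed

lemma finite_addrs: "finite (addrs n)"
proof -
  have "addrs n = {xs. set xs \<subseteq> {..<6} \<and> length xs = n}" by (auto simp: addrs_def)
  then show ?thesis by (simp add: finite_lists_length_eq)
qed

lemma finite_SE: "finite (SE n)"
  by (simp add: SE_def finite_addrs)

lemma finite_TE: "finite (TE n)"
  by (simp add: TE_eq_image_Tedge finite_SE)

definition projected_config :: "nat \<Rightarrow> (nat list \<times> nat \<Rightarrow> bool) \<Rightarrow> complex set \<Rightarrow> bool" where
  "projected_config n \<omega> b = (\<exists>e\<in>SE n. Tedge e = b \<and> \<omega> e)"

lemma Spath_projects:
  assumes "(x, y) \<in> {(u, v). \<exists>e\<in>SE n. \<omega> e \<and> (Sends e = (u, v) \<or> Sends e = (v, u))}\<^sup>*"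
  shows "(Spoint x, Spoint y) \<in> {(u, v). {u, v} \<in> TE n \<and> projected_config n \<omega> {u, v}}\<^sup>*"
  using assms
proof (induction rule: rtrancl_induct)
  case base
  then show ?case by simp
next
  case (step y z)
  then obtain e where e: "e \<in> SE n" "\<omega> e" "Sends e = (y, z) \<or> Sends e = (z, y)" by auto
  then have "Tedge e = {Spoint y, Spoint z}" by (auto simp: Tedge_Sends)
  then have "{Spoint y, Spoint z} \<in> TE n" "projected_config n \<omega> {Spoint y, Spoint z}"
    using e by (auto simp: TE_eq_image_Tedge projected_config_def)
  then show ?case using step.IH by (simp add: rtrancl.rtrancl_into_rtrancl)
qed

lemma S_cross_half_le_T_cross:
  assumes p: "0 \<le> p" "p \<le> 1"
  shows "S_cross n (p / 2) \<le> T_cross n p"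
proof -
  define crossing where "crossing = {\<eta>. (tv0, tv1) \<in> {(u, v). {u, v} \<in> TE n \<and> \<eta> {u, v}}\<^sup>*}"
  define r where "r b = 1 - (1 - p / 2) ^ card {e \<in> SE n. Tedge e = b}" for b
  have "Spoint ([], 0) = tv0" "Spoint ([], 1) = tv1" by (simp_all add: Spoint_def)
  then have "S_cross n (p / 2)
      \<le> measure_pmf.prob (perc (SE n) (p / 2)) {\<omega>. projected_config n \<omega> \<in> crossing}"
    unfolding S_cross_def crossing_def
    by (intro measure_pmf.finite_measure_mono subsetI) (auto dest: Spath_projects)
  also have "\<dots> = measure_pmf.prob (map_pmf (projected_config n) (perc (SE n) (p / 2))) crossing"
    by (simp add: vimage_def)
  also have "map_pmf (projected_config n) (perc (SE n) (p / 2))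
      = Pi_pmf (TE n) False (\<lambda>b. bernoulli_pmf (r b))"
    unfolding perc_def r_def projected_config_def[abs_def] TE_eq_image_Tedge using p
    by (intro map_pmf_fiber_Bex_Pi_bernoulli finite_imageI finite_SE) auto
  also have "measure_pmf.prob (Pi_pmf (TE n) False (\<lambda>b. bernoulli_pmf (r b))) crossing
      \<le> measure_pmf.prob (Pi_pmf (TE n) False (\<lambda>_. bernoulli_pmf p)) crossing"
  proof (rule prob_Pi_bernoulli_mono[OF finite_TE _ p(2)])
    fix b
    have q: "0 \<le> 1 - p / 2" "1 - p / 2 \<le> 1" using p by auto
    have "(1 - p / 2) ^ 2 \<le> (1 - p / 2) ^ card {e \<in> SE n. Tedge e = b}"
      using q card_Tedge_fiber_le_2[of n b] by (intro power_decreasing) auto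
    moreover have "(1 - p / 2) ^ card {e \<in> SE n. Tedge e = b} \<le> 1" using q by (simp add: power_le_one)
    moreover have "1 - (1 - p / 2) ^ 2 \<le> p" using p by (simp add: power2_eq_square field_simps)
    ultimately show "0 \<le> r b \<and> r b \<le> p" unfolding r_def by linarith
  next
    fix \<eta> \<eta>' :: "complex set \<Rightarrow> bool"
    assume "\<eta> \<in> crossing" "\<forall>b. \<eta> b \<longrightarrow> \<eta>' b"
    then show "\<eta>' \<in> crossing" unfolding crossing_def by (auto elim!: rtrancl_mono[THEN subsetD, rotated])
  qed
  also have "\<dots> = T_cross n p" by (simp add: T_cross_def perc_def crossing_def)
  finally show ?thesis .
qed

lemma T_cross_0: "T_cross n 0 = 0"
proof -
  have "perc (TE n) 0 = Pi_pmf (TE n) False (\<lambda>_. return_pmf False)"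
    unfolding perc_def by (intro Pi_pmf_cong refl) (rule pmf_bool_eqI, simp)
  also have "\<dots> = return_pmf (\<lambda>_. False)" by (simp add: finite_TE)
  finally have closed: "perc (TE n) 0 = return_pmf (\<lambda>_. False)" .
  have "tv0 \<noteq> tv1" by (simp add: tv0_def tv1_def)
  then show ?thesis unfolding T_cross_def closed by (simp add: measure_pmf_zero_iff)
qed

theorem corollary4p10:
  shows "p_S \<ge> p_T / 2"
proof -
  define XT where "XT = {p \<in> {0..1}. (\<lambda>n. T_cross n p) \<longlonglongrightarrow> 0}"
  define XS where "XS = {p \<in> {0..1}. (\<lambda>n. S_cross n p) \<longlonglongrightarrow> 0}"
  have "XT \<noteq> {}" using T_cross_0 unfolding XT_def by (intro ex_in_conv[THEN iffD1] exI[of _ 0]) auto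
  have "bdd_above XS" unfolding XS_def by (intro bdd_aboveI[of _ 1]) auto
  have "p \<le> 2 * Sup XS" if "p \<in> XT" for p
  proof -
    have p: "0 \<le> p" "p \<le> 1" and T: "(\<lambda>n. T_cross n p) \<longlonglongrightarrow> 0" using that by (auto simp: XT_def)
    have "(\<lambda>n. S_cross n (p / 2)) \<longlonglongrightarrow> 0"
    proof (rule Lim_null_comparison[OF _ T])
      show "\<forall>\<^sub>F n in sequentially. norm (S_cross n (p / 2)) \<le> T_cross n p"
        using S_cross_half_le_T_cross[OF p] by (simp add: S_cross_def)
    qed
    then have "p / 2 \<in> XS" using p by (simp add: XS_def)
    from cSup_upper[OF this \<open>bdd_above XS\<close>] show ?thesis by simp
  qed
  then have "Sup XT \<le> 2 * Sup XS" by (intro cSup_least[OF \<open>XT \<noteq> {}\<close>])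
  then show ?thesis unfolding p_S_def p_T_def XT_def[symmetric] XS_def[symmetric] by simp
qed

end
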